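(* Let $f$ be a piecewise contracting interval map satisfying the separation property, let $x\in\widetilde X$ and let $\theta$ be its itinerary. Then \[ \#\Delta^n_{lr}(x)\leqslant p(\theta,n+1)-p(\theta,n)\leqslant\#\Delta\qquad\forall\, n\geqslant 1. \] Moreover, if $n_0\geqslant 1$ is the smallest integer such that $\#(A\cap\Delta)\leqslant 1$ for every $A\in\mathcal{A}_n(x)$ and every $n\geqslant n_0$, then \[ p(\theta,n+1)=p(\theta,n)+\#\Delta^n_{lr}(x)\qquad\forall\, n\geqslant n_0. \]
   Context: Let $X$ be a compact interval of $\mathbb{R}$ and $X_1<\dots<X_N$ ($N\geqslant 2$) non-empty pairwise disjoint intervals, open in $X$, with $X=\bigcup_i\overline{X_i}$; $\Delta:=\{x\in\overline{X_i}\cap\overline{X_j}:i\neq j\}=\{c_1,\dots,c_{N-1}\}$ with $\{c_i\}=\overline{X_i}\cap\overline{X_{i+1}}$. A piecewise contracting interval map is $f:X\to X$, discontinuous at each point of $\Delta$, with $\lambda\in(0,1)$ such that $|f(x)-f(y)|\leqslant\lambda|x-y|$ for $x,y$ in the same $X_i$; $f_i$ is the continuous extension of $f|_{X_i}$ to $\overline{X_i}$. Separation property: each $f_i$ injective and $f_i(\overline{X_i})\cap f_j(\overline{X_j})=\emptyset$ for $i\neq j$. $\widetilde X:=\bigcap_{n\geqslant0}f^{-n}(X\setminus\Delta)$; the itinerary of $x\in\widetilde X$ is $\theta$ with $\theta_t=i$ iff $f^t(x)\in X_i$; $p(\theta,n):=\#\{\theta_t\dots\theta_{t+n-1}:t\geqslant0\}$.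 Atoms: $F_i(A):=\overline{f(A\cap X_i)}$, $A_{i_1\dots i_n}:=F_{i_n}\circ\dots\circ F_{i_1}(X)$ is an atom of generation $n$ if non-empty; $\mathcal{A}_n$ is the set of these and $\mathcal{A}_n(x):=\{A\in\mathcal{A}_n:\exists t\in\mathbb{N},\ f^{t+n}(x)\in A\}$. $c_i\in\Delta$ is $n$-left-right visited by the orbit of $x$ if there is $A\in\mathcal{A}_n(x)$ with $c_i\in A$, $f^{t+n}(x)\in A\cap X_i$ and $f^{t'+n}(x)\in A\cap X_{i+1}$ for some $t,t'\in\mathbb{N}$; $\Delta^n_{lr}(x)$ is the set of such discontinuities. *)

theory Defs
  imports "HOL-Analysis.Analysis"
begin

text \<open>The partition is given by points c 0 < c 1 < ... < c N of the real line;
  X = [c 0, c N], Delta = {c 1, ..., c (N-1)}, X_1 = [c 0, c 1), X_N = (c (N-1), c N],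
  and X_i = (c (i-1), c i) otherwise (indices i in {1..N}).\<close>

definition Xall :: "(nat \<Rightarrow> real) \<Rightarrow> nat \<Rightarrow> real set" where
  "Xall c N = {c 0 .. c N}"

definition Xpart :: "(nat \<Rightarrow> real) \<Rightarrow> nat \<Rightarrow> nat \<Rightarrow> real set" where
  "Xpart c N i = {x. (c (i - 1) < x \<or> (i = 1 \<and> x = c 0)) \<and> (x < c i \<or> (i = N \<and> x = c N))}"

definition Disc :: "(nat \<Rightarrow> real) \<Rightarrow> nat \<Rightarrow> real set" where
  "Disc c N = c ` {1 .. N - 1}"

definition pc_map :: "(nat \<Rightarrow> real) \<Rightarrow> nat \<Rightarrow> real \<Rightarrow> (real \<Rightarrow> real) \<Rightarrow> bool" where
  "pc_map c N lam f \<longleftrightarrow>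
     N \<ge> 2 \<and> (\<forall>i < N. c i < c (Suc i)) \<and>
     f ` Xall c N \<subseteq> Xall c N \<and>
     (\<forall>i \<in> {1 .. N - 1}. \<not> continuous (at (c i) within Xall c N) f) \<and>
     0 < lam \<and> lam < 1 \<and>
     (\<forall>i \<in> {1 .. N}. \<forall>x \<in> Xpart c N i. \<forall>y \<in> Xpart c N i. \<bar>f x - f y\<bar> \<le> lam * \<bar>x - y\<bar>)"

definition fext :: "(nat \<Rightarrow> real) \<Rightarrow> nat \<Rightarrow> (real \<Rightarrow> real) \<Rightarrow> nat \<Rightarrow> real \<Rightarrow> real" where
  "fext c N f i y = (if y \<in> Xpart c N i then f y else Lim (at y within Xpart c N i) f)"

definition separation :: "(nat \<Rightarrow> real) \<Rightarrow> nat \<Rightarrow> (real \<Rightarrow> real) \<Rightarrow> bool" where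
  "separation c N f \<longleftrightarrow>
     (\<forall>i \<in> {1 .. N}. inj_on (fext c N f i) (closure (Xpart c N i))) \<and>
     (\<forall>i \<in> {1 .. N}. \<forall>j \<in> {1 .. N}. i \<noteq> j \<longrightarrow>
        fext c N f i ` closure (Xpart c N i) \<inter> fext c N f j ` closure (Xpart c N j) = {})"

definition Xtilde :: "(nat \<Rightarrow> real) \<Rightarrow> nat \<Rightarrow> (real \<Rightarrow> real) \<Rightarrow> real set" where
  "Xtilde c N f = {x \<in> Xall c N. \<forall>n. (f ^^ n) x \<in> Xall c N - Disc c N}"

definition is_itinerary :: "(nat \<Rightarrow> real) \<Rightarrow> nat \<Rightarrow> (real \<Rightarrow> real) \<Rightarrow> real \<Rightarrow> (nat \<Rightarrow> nat) \<Rightarrow> bool" where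
  "is_itinerary c N f x \<theta> \<longleftrightarrow> (\<forall>t. \<theta> t \<in> {1 .. N} \<and> (f ^^ t) x \<in> Xpart c N (\<theta> t))"

definition pcompl :: "(nat \<Rightarrow> nat) \<Rightarrow> nat \<Rightarrow> nat" where
  "pcompl \<theta> n = card ((\<lambda>t. map \<theta> [t ..< t + n]) ` UNIV)"

definition Fop :: "(nat \<Rightarrow> real) \<Rightarrow> nat \<Rightarrow> (real \<Rightarrow> real) \<Rightarrow> nat \<Rightarrow> real set \<Rightarrow> real set" where
  "Fop c N f i A = closure (f ` (A \<inter> Xpart c N i))"

definition atom_of :: "(nat \<Rightarrow> real) \<Rightarrow> nat \<Rightarrow> (real \<Rightarrow> real) \<Rightarrow> nat list \<Rightarrow> real set" where
  "atom_of c N f w = foldl (\<lambda>A i. Fop c N f i A) (Xall c N) w"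

definition atoms :: "(nat \<Rightarrow> real) \<Rightarrow> nat \<Rightarrow> (real \<Rightarrow> real) \<Rightarrow> nat \<Rightarrow> real set set" where
  "atoms c N f n = {atom_of c N f w | w. length w = n \<and> set w \<subseteq> {1 .. N} \<and> atom_of c N f w \<noteq> {}}"

definition atoms_x :: "(nat \<Rightarrow> real) \<Rightarrow> nat \<Rightarrow> (real \<Rightarrow> real) \<Rightarrow> nat \<Rightarrow> real \<Rightarrow> real set set" where
  "atoms_x c N f n x = {A \<in> atoms c N f n. \<exists>t. (f ^^ (t + n)) x \<in> A}"

definition Delta_lr :: "(nat \<Rightarrow> real) \<Rightarrow> nat \<Rightarrow> (real \<Rightarrow> real) \<Rightarrow> nat \<Rightarrow> real \<Rightarrow> real set" where
  "Delta_lr c N f n x = {c i | i. i \<in> {1 .. N - 1} \<and>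
      (\<exists>A \<in> atoms_x c N f n x. c i \<in> A \<and>
         (\<exists>t. (f ^^ (t + n)) x \<in> A \<inter> Xpart c N i) \<and>
         (\<exists>t'. (f ^^ (t' + n)) x \<in> A \<inter> Xpart c N (Suc i)))}"

end

theory Submission
  imports Defs
begin

text \<open>Every atom of generation n is a closed interval, and by the separation property atoms
  with different codes are disjoint. The orbit point at time t + n lies in the atom coded by the
  factor of \<theta> of length n starting at t, so a factor w of \<theta> determines a unique atom A_w
  meeting the orbit. If letters a < b both follow w in \<theta>, the interval A_w contains orbit
  points of X_a and of X_b, hence all of c_a, ..., c_(b-1). Thus w has at most
  #(A_w \<inter> \<Delta>) + 1 right extensions; summing over the (disjoint) atoms gives the upper bound.
  Two consecutive right extensions i, i + 1 of w make c_i left-right visited, which gives the lower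
  bound; and when each atom contains at most one discontinuity, the right extensions of w are
  at most two and consecutive, which gives equality.\<close>

subsection \<open>Extension of uniformly continuous functions to the closure\<close>

lemma continuous_on_closure_Lim_extension:
  fixes f :: "'a::metric_space \<Rightarrow> 'b::complete_space"
  assumes "uniformly_continuous_on S f"
  shows "continuous_on (closure S) (\<lambda>y. if y \<in> S then f y else Lim (at y within S) f)"
    (is "continuous_on _ ?g")
proof -
  obtain h where h: "uniformly_continuous_on (closure S) h" "\<And>y. y \<in> S \<Longrightarrow> f y = h y"
    using uniformly_continuous_on_extension_on_closure[OF assms] by metis
  have h_cont: "continuous_on (closure S) h"
    using h(1) uniformly_continuous_imp_continuous by blast
  have eq: "h y = ?g y" if y: "y \<in> closure S" for y
  proof (cases "y \<in> S")
    case False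
    then have "y islimpt S" using y by (simp add: closure_def)
    have "(h \<longlongrightarrow> h y) (at y within S)"
      using h_cont y closure_subset by (auto simp: continuous_on_def intro: tendsto_within_subset)
    then have "(f \<longlongrightarrow> h y) (at y within S)"
      by (rule tendsto_cong[THEN iffD1, rotated]) (auto simp: h(2) eventually_at_filter)
    then have "h y = Lim (at y within S) f"
      using \<open>y islimpt S\<close> by (intro tendsto_Lim[symmetric]) (auto simp: trivial_limit_within)
    then show ?thesis using False by simp
  qed (simp add: h(2))
  show ?thesis by (rule continuous_on_eq[OF h_cont eq])
qed

lemma closure_image_eq_Lim_extension_image:
  fixes f :: "'a::heine_borel \<Rightarrow> 'b::complete_space"
  assumes "uniformly_continuous_on S f" "bounded S" "T \<subseteq> S"
  shows "closure (f ` T) = (\<lambda>y. if y \<in> S then f y else Lim (at y within S) f) ` closure T"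
    (is "_ = ?g ` _")
proof
  have cont: "continuous_on (closure T) ?g"
    using continuous_on_subset[OF continuous_on_closure_Lim_extension[OF assms(1)]]
      closure_mono[OF assms(3)] .
  have "compact (closure T)"
    using assms(2,3) bounded_subset compact_closure by blast
  then have "closed (?g ` closure T)"
    using cont compact_continuous_image compact_imp_closed by blast
  moreover have img: "?g ` T = f ` T" using assms(3) by auto
  ultimately show "closure (f ` T) \<subseteq> ?g ` closure T"
    unfolding img[symmetric] by (meson closure_minimal closure_subset image_mono)
  show "?g ` closure T \<subseteq> closure (f ` T)"
  proof (rule image_closure_subset[OF cont closed_closure])
    show "?g ` T \<subseteq> closure (f ` T)" unfolding img by (rule closure_subset)
  qed
qed

subsection \<open>Factors and right extensions of a sequence\<close>

definition factors :: "(nat \<Rightarrow> 'a) \<Rightarrow> nat \<Rightarrow> 'a list set" where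
  "factors \<theta> n = range (\<lambda>t. map \<theta> [t..<t + n])"

definition right_extensions :: "(nat \<Rightarrow> 'a) \<Rightarrow> 'a list \<Rightarrow> 'a set" where
  "right_extensions \<theta> w = {\<theta> (t + length w) | t. map \<theta> [t..<t + length w] = w}"

lemma pcompl_eq_card_factors: "pcompl \<theta> n = card (factors \<theta> n)"
  by (simp add: pcompl_def factors_def)

lemma factors_in_lists: "w \<in> factors \<theta> n \<Longrightarrow> length w = n \<and> set w \<subseteq> range \<theta>"
  by (auto simp: factors_def)

lemma finite_factors: "finite (range \<theta>) \<Longrightarrow> finite (factors \<theta> n)"
  by (rule finite_subset[OF _ finite_lists_length_eq[of "range \<theta>" n]])
    (auto dest: factors_in_lists)

lemma right_extensionsI: "map \<theta> [t..<t + length w] = w \<Longrightarrow> \<theta> (t + length w) \<in> right_extensions \<theta> w"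
  by (auto simp: right_extensions_def)

lemma right_extensions_subset_range: "right_extensions \<theta> w \<subseteq> range \<theta>"
  by (auto simp: right_extensions_def)

lemma right_extensions_nonempty: "w \<in> factors \<theta> n \<Longrightarrow> right_extensions \<theta> w \<noteq> {}"
  by (auto simp: factors_def right_extensions_def)

lemma factors_Suc: "factors \<theta> (Suc n) = (\<Union>w\<in>factors \<theta> n. (\<lambda>a. w @ [a]) ` right_extensions \<theta> w)"
proof (intro equalityI subsetI)
  fix u assume "u \<in> factors \<theta> (Suc n)"
  then obtain t where u: "u = map \<theta> [t..<t + n] @ [\<theta> (t + n)]"
    by (auto simp: factors_def)
  have "map \<theta> [t..<t + n] \<in> factors \<theta> n" "\<theta> (t + n) \<in> right_extensions \<theta> (map \<theta> [t..<t + n])"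
    by (auto simp: factors_def right_extensions_def)
  then show "u \<in> (\<Union>w\<in>factors \<theta> n. (\<lambda>a. w @ [a]) ` right_extensions \<theta> w)"
    unfolding u by blast
next
  fix u assume "u \<in> (\<Union>w\<in>factors \<theta> n. (\<lambda>a. w @ [a]) ` right_extensions \<theta> w)"
  then obtain w a where u: "u = w @ [a]" and w: "w \<in> factors \<theta> n"
    and a: "a \<in> right_extensions \<theta> w"
    by blast
  obtain t where "map \<theta> [t..<t + length w] = w" "a = \<theta> (t + length w)"
    using a by (auto simp: right_extensions_def)
  then have "u = map \<theta> [t..<t + Suc n]"
    using u factors_in_lists[OF w] by auto
  then show "u \<in> factors \<theta> (Suc n)"
    by (simp add: factors_def)
qed

lemma pcompl_Suc_eq_sum_right_extensions:
  assumes "finite (range \<theta>)"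
  shows "pcompl \<theta> (Suc n) = pcompl \<theta> n + (\<Sum>w\<in>factors \<theta> n. card (right_extensions \<theta> w) - 1)"
proof -
  have fin: "finite (right_extensions \<theta> w)" for w
    using assms right_extensions_subset_range finite_subset by metis
  have "pcompl \<theta> (Suc n) = (\<Sum>w\<in>factors \<theta> n. card ((\<lambda>a. w @ [a]) ` right_extensions \<theta> w))"
    unfolding pcompl_eq_card_factors factors_Suc
    by (rule card_UN_disjoint) (use finite_factors[OF assms] fin in auto)
  also have "\<dots> = (\<Sum>w\<in>factors \<theta> n. (card (right_extensions \<theta> w) - 1) + 1)"
  proof (rule sum.cong[OF refl])
    fix w assume "w \<in> factors \<theta> n"
    then have "card (right_extensions \<theta> w) \<noteq> 0"
      using right_extensions_nonempty fin by simp
    moreover have "inj_on (\<lambda>a. w @ [a]) (right_extensions \<theta> w)"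
      by (rule inj_onI) simp
    ultimately show "card ((\<lambda>a. w @ [a]) ` right_extensions \<theta> w) = card (right_extensions \<theta> w) - 1 + 1"
      by (simp add: card_image)
  qed
  also have "\<dots> = pcompl \<theta> n + (\<Sum>w\<in>factors \<theta> n. card (right_extensions \<theta> w) - 1)"
    unfolding sum.distrib by (simp add: pcompl_eq_card_factors)
  finally show ?thesis .
qed

lemma card_with_successor_le:
  fixes K :: "nat set"
  assumes "finite K"
  shows "card {k \<in> K. Suc k \<in> K} \<le> card K - 1"
proof (cases "K = {}")
  case False
  have "{k \<in> K. Suc k \<in> K} \<subseteq> K - {Max K}"
    using Max_ge[OF assms] by fastforce
  then show ?thesis
    using card_mono[of "K - {Max K}"] assms False by simp
qed simp

subsection \<open>The partition and the atoms\<close>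

locale pc_interval_map =
  fixes c :: "nat \<Rightarrow> real" and N :: nat and lam :: real and f :: "real \<Rightarrow> real"
  assumes pc_map: "pc_map c N lam f" and separation: "separation c N f"
begin

abbreviation atom :: "nat list \<Rightarrow> real set" where
  "atom w \<equiv> atom_of c N f w"

lemma c_less: "i < j \<Longrightarrow> j \<le> N \<Longrightarrow> c i < c j"
proof (induction j)
  case (Suc j)
  have "c j < c (Suc j)" using Suc.prems pc_map by (simp add: pc_map_def)
  then show ?case using Suc by (cases "i = j") auto
qed simp

lemma c_le: "i \<le> j \<Longrightarrow> j \<le> N \<Longrightarrow> c i \<le> c j"
  using c_less[of i j] by (cases "i = j") auto

lemma inj_on_c: "inj_on c {0..N}"
  by (rule inj_onI) (metis atLeastAtMost_iff c_less linorder_neqE_nat order_less_irrefl)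

lemma card_c_image:
  assumes "b \<le> N"
  shows "card (c ` {a..<b}) = b - a"
proof -
  have "{a..<b} \<subseteq> {0..N}" using assms by auto
  then show ?thesis by (simp add: card_image inj_on_subset[OF inj_on_c])
qed

lemma Xpart_less: "y \<in> Xpart c N i \<Longrightarrow> i < N \<Longrightarrow> y < c i"
  by (auto simp: Xpart_def)

lemma Xpart_greater: "y \<in> Xpart c N i \<Longrightarrow> 1 < i \<Longrightarrow> c (i - 1) < y"
  by (auto simp: Xpart_def)

lemma Xpart_disjoint:
  assumes "i \<in> {1..N}" "j \<in> {1..N}" "y \<in> Xpart c N i" "y \<in> Xpart c N j"
  shows "i = j"
proof -
  have False if "i < j" "i \<in> {1..N}" "j \<in> {1..N}" "y \<in> Xpart c N i" "y \<in> Xpart c N j" for i j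
  proof -
    have "c i \<le> c (j - 1)" using that by (intro c_le) auto
    then show False using Xpart_less[of y i] Xpart_greater[of y j] that by auto
  qed
  then show ?thesis using assms by (metis linorder_neqE_nat)
qed

lemma Xpart_subset_Xall:
  assumes "i \<in> {1..N}"
  shows "Xpart c N i \<subseteq> Xall c N"
proof -
  have "c 0 \<le> c (i - 1)" "c i \<le> c N" using assms by (auto intro: c_le)
  then show ?thesis by (auto simp: Xpart_def Xall_def)
qed

lemma is_interval_Xpart: "is_interval (Xpart c N i)"
  unfolding is_interval_1 Xpart_def by auto

lemma bounded_Xpart: "i \<in> {1..N} \<Longrightarrow> bounded (Xpart c N i)"
  using Xpart_subset_Xall bounded_subset[of "Xall c N"] by (auto simp: Xall_def)

lemma uniformly_continuous_on_Xpart: "i \<in> {1..N} \<Longrightarrow> uniformly_continuous_on (Xpart c N i) f"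
  using pc_map by (intro lipschitz_on_uniformly_continuous[of lam] lipschitz_onI)
    (auto simp: pc_map_def dist_real_def)

lemma Fop_eq_fext_image:
  assumes "i \<in> {1..N}"
  shows "Fop c N f i A = fext c N f i ` closure (A \<inter> Xpart c N i)"
proof -
  have fext: "fext c N f i = (\<lambda>y. if y \<in> Xpart c N i then f y else Lim (at y within Xpart c N i) f)"
    by (simp add: fun_eq_iff fext_def)
  show ?thesis
    unfolding Fop_def fext using assms
    by (intro closure_image_eq_Lim_extension_image uniformly_continuous_on_Xpart bounded_Xpart) auto
qed

lemma atom_Nil: "atom [] = Xall c N"
  by (simp add: atom_of_def)

lemma atom_snoc: "atom (w @ [i]) = Fop c N f i (atom w)"
  by (simp add: atom_of_def)

lemma closed_atom: "closed (atom w)"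
  by (cases w rule: rev_exhaust) (auto simp: atom_snoc atom_Nil Fop_def Xall_def)

lemma is_interval_atom: "set w \<subseteq> {1..N} \<Longrightarrow> is_interval (atom w)"
proof (induction w rule: rev_induct)
  case Nil
  then show ?case by (simp add: atom_Nil Xall_def is_interval_cc)
next
  case (snoc i w)
  let ?S = "atom w \<inter> Xpart c N i"
  have i: "i \<in> {1..N}" using snoc.prems by simp
  have "is_interval ?S" using snoc is_interval_Xpart is_interval_Int by auto
  moreover have "continuous_on ?S f"
    using uniformly_continuous_imp_continuous[OF uniformly_continuous_on_Xpart[OF i]]
    by (rule continuous_on_subset) simp
  ultimately have "is_interval (f ` ?S)"
    using connected_continuous_image is_interval_connected_1 by blast
  then show ?case
    by (simp add: atom_snoc Fop_def is_interval_convex_1 convex_closure)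
qed

text \<open>Atoms of the same generation with different codes are disjoint: at the last letter either
  the two images lie in different branches, which the separation property keeps apart, or they
  lie in the same branch, whose extension is injective.\<close>

lemma atoms_disjoint:
  "length w = length w' \<Longrightarrow> set w \<subseteq> {1..N} \<Longrightarrow> set w' \<subseteq> {1..N} \<Longrightarrow> w \<noteq> w'
   \<Longrightarrow> atom w \<inter> atom w' = {}"
proof (induction w arbitrary: w' rule: rev_induct)
  case Nil
  then show ?case by simp
next
  case (snoc i u)
  from snoc.prems(1) obtain u' j where w': "w' = u' @ [j]"
    by (cases w' rule: rev_exhaust) auto
  have i: "i \<in> {1..N}" and j: "j \<in> {1..N}" using snoc.prems w' by auto
  have branch: "fext c N f k ` closure (A \<inter> Xpart c N k) \<subseteq> fext c N f k ` closure (Xpart c N k)"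
    for k A by (intro image_mono closure_mono) auto
  show ?case
  proof (cases "i = j")
    case False
    then have "fext c N f i ` closure (Xpart c N i) \<inter> fext c N f j ` closure (Xpart c N j) = {}"
      using separation i j by (simp add: separation_def)
    then show ?thesis
      unfolding w' atom_snoc Fop_eq_fext_image[OF i] Fop_eq_fext_image[OF j]
      using branch[of i] branch[of j] by blast
  next
    case True
    then have "u \<noteq> u'" using snoc.prems(4) w' by simp
    then have "atom u \<inter> atom u' = {}"
      using snoc.IH[of u'] snoc.prems w' by simp
    moreover have "closure (A \<inter> Xpart c N i) \<subseteq> A" if "closed A" for A
      using that by (simp add: closure_minimal)
    ultimately have disj: "closure (atom u \<inter> Xpart c N i) \<inter> closure (atom u' \<inter> Xpart c N i) = {}"
      using closed_atom by blast
    have inj: "inj_on (fext c N f i) (closure (Xpart c N i))"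
      using separation i by (simp add: separation_def)
    have sub: "closure (atom v \<inter> Xpart c N i) \<subseteq> closure (Xpart c N i)" for v
      by (intro closure_mono) simp
    have "Fop c N f i (atom u) \<inter> Fop c N f i (atom u') =
        fext c N f i ` (closure (atom u \<inter> Xpart c N i) \<inter> closure (atom u' \<inter> Xpart c N i))"
      unfolding Fop_eq_fext_image[OF i] by (rule inj_on_image_Int[OF inj sub sub, symmetric])
    then show ?thesis
      unfolding w' atom_snoc True[symmetric] disj by simp
  qed
qed

end

subsection \<open>Atoms visited by an orbit\<close>

lemma Delta_lr_subset_Disc: "Delta_lr c N f n x \<subseteq> Disc c N"
  by (auto simp: Delta_lr_def Disc_def)

locale pc_itinerary = pc_interval_map +
  fixes x :: real and \<theta> :: "nat \<Rightarrow> nat"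
  assumes itinerary: "is_itinerary c N f x \<theta>"
begin

lemma itinerary_range: "\<theta> t \<in> {1..N}"
  using itinerary by (simp add: is_itinerary_def)

lemma orbit_in_Xpart: "(f ^^ t) x \<in> Xpart c N (\<theta> t)"
  using itinerary by (simp add: is_itinerary_def)

lemma finite_range_itinerary: "finite (range \<theta>)"
  using itinerary_range by (auto intro: finite_subset[of _ "{1..N}"])

lemma factors_letters: "w \<in> factors \<theta> n \<Longrightarrow> length w = n \<and> set w \<subseteq> {1..N}"
  using factors_in_lists itinerary_range by blast

lemma orbit_in_atom: "(f ^^ (t + n)) x \<in> atom (map \<theta> [t..<t + n])"
proof (induction n)
  case 0
  show ?case using orbit_in_Xpart Xpart_subset_Xall itinerary_range by (auto simp: atom_Nil)
next
  case (Suc n)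
  then have "(f ^^ (t + Suc n)) x \<in> f ` (atom (map \<theta> [t..<t + n]) \<inter> Xpart c N (\<theta> (t + n)))"
    using orbit_in_Xpart by auto
  then show ?case by (simp add: atom_snoc Fop_def closure_subset[THEN subsetD])
qed

lemma orbit_in_atom_imp_factor:
  assumes "(f ^^ (t + n)) x \<in> atom u" "length u = n" "set u \<subseteq> {1..N}"
  shows "u = map \<theta> [t..<t + n]"
  using atoms_disjoint[of u "map \<theta> [t..<t + n]"] orbit_in_atom[of t n] assms itinerary_range
  by fastforce

lemma atom_in_atoms_x: "w \<in> factors \<theta> n \<Longrightarrow> atom w \<in> atoms_x c N f n x"
  using orbit_in_atom factors_letters by (fastforce simp: factors_def atoms_x_def atoms_def)

lemma right_extension_orbit:
  assumes "a \<in> right_extensions \<theta> w"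
  obtains t where "(f ^^ (t + length w)) x \<in> atom w \<inter> Xpart c N a" "w \<in> factors \<theta> (length w)"
proof -
  obtain t where t: "map \<theta> [t..<t + length w] = w" "a = \<theta> (t + length w)"
    using assms by (auto simp: right_extensions_def)
  have "(f ^^ (t + length w)) x \<in> atom w"
    using orbit_in_atom[of t "length w"] unfolding t(1) .
  moreover have "(f ^^ (t + length w)) x \<in> Xpart c N a"
    using orbit_in_Xpart[of "t + length w"] unfolding t(2) .
  moreover have "w \<in> factors \<theta> (length w)"
    using rangeI[of "\<lambda>s. map \<theta> [s..<s + length w]" t] unfolding factors_def t(1) .
  ultimately show ?thesis by (intro that) simp_all
qed

lemma right_extensions_letters: "right_extensions \<theta> w \<subseteq> {1..N}"
  using right_extensions_subset_range itinerary_range by fastforce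

lemma discontinuities_between_right_extensions:
  assumes a: "a \<in> right_extensions \<theta> w" and b: "b \<in> right_extensions \<theta> w" and "a < b"
  shows "c ` {a..<b} \<subseteq> atom w \<inter> Disc c N"
proof
  fix z assume "z \<in> c ` {a..<b}"
  then obtain k where k: "a \<le> k" "k < b" "z = c k" by auto
  obtain p q where p: "p \<in> atom w \<inter> Xpart c N a" and q: "q \<in> atom w \<inter> Xpart c N b"
    and w: "w \<in> factors \<theta> (length w)"
    using right_extension_orbit[OF a] right_extension_orbit[OF b] by metis
  have "a \<in> {1..N}" "b \<in> {1..N}"
    using a b right_extensions_letters by blast+
  then have "c a \<le> c k" "c k \<le> c (b - 1)" "p < c a" "c (b - 1) < q"
    using k p q \<open>a < b\<close> Xpart_less[of p a] Xpart_greater[of q b] by (auto intro: c_le)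
  then have "p \<le> c k" "c k \<le> q" by auto
  moreover have "is_interval (atom w)"
    using is_interval_atom factors_letters[OF w] by blast
  ultimately have "c k \<in> atom w"
    using p q unfolding is_interval_1 by blast
  moreover have "k \<in> {1..N - 1}"
    using k \<open>a \<in> {1..N}\<close> \<open>b \<in> {1..N}\<close> by simp
  then have "c k \<in> Disc c N"
    unfolding Disc_def by (rule imageI)
  ultimately show "z \<in> atom w \<inter> Disc c N" using k by simp
qed

lemma finite_right_extensions: "finite (right_extensions \<theta> w)"
  using right_extensions_letters by (rule finite_subset) simp

lemma finite_factors_itinerary: "finite (factors \<theta> n)"
  using finite_range_itinerary by (rule finite_factors)

lemma atoms_of_factors_disjoint:
  assumes "w \<in> factors \<theta> n" "w' \<in> factors \<theta> n" "w \<noteq> w'"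
  shows "atom w \<inter> atom w' = {}"
  using factors_letters[OF assms(1)] factors_letters[OF assms(2)] assms(3)
  by (intro atoms_disjoint) simp_all

lemma card_right_extensions_le: "card (right_extensions \<theta> w) \<le> card (atom w \<inter> Disc c N) + 1"
proof (cases "right_extensions \<theta> w = {}")
  case False
  let ?E = "right_extensions \<theta> w"
  let ?a = "Min ?E" and ?b = "Max ?E"
  have ab: "?a \<in> ?E" "?b \<in> ?E"
    using finite_right_extensions False by simp_all
  have "card ?E \<le> card {?a..?b}"
    using finite_right_extensions by (intro card_mono) auto
  moreover have "?b - ?a \<le> card (atom w \<inter> Disc c N)"
  proof (cases "?a < ?b")
    case True
    have "?b \<le> N" using subsetD[OF right_extensions_letters ab(2)] by simp
    then have "?b - ?a = card (c ` {?a..<?b})" by (simp add: card_c_image)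
    also have "\<dots> \<le> card (atom w \<inter> Disc c N)"
      using discontinuities_between_right_extensions[OF ab True]
      by (rule card_mono[rotated]) (simp add: Disc_def)
    finally show ?thesis .
  qed simp
  ultimately show ?thesis by simp
qed simp

lemma right_extensions_increment_le_card_Disc:
  "(\<Sum>w\<in>factors \<theta> n. card (right_extensions \<theta> w) - 1) \<le> card (Disc c N)"
proof -
  let ?D = "\<lambda>w. atom w \<inter> Disc c N"
  have "(\<Sum>w\<in>factors \<theta> n. card (right_extensions \<theta> w) - 1) \<le> (\<Sum>w\<in>factors \<theta> n. card (?D w))"
    using card_right_extensions_le by (intro sum_mono) (simp add: le_diff_conv)
  also have "\<dots> = card (\<Union>w\<in>factors \<theta> n. ?D w)"
  proof (rule card_UN_disjoint[symmetric])
    show "\<forall>w\<in>factors \<theta> n. \<forall>w'\<in>factors \<theta> n. w \<noteq> w' \<longrightarrow> ?D w \<inter> ?D w' = {}"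
      using atoms_of_factors_disjoint by blast
  qed (simp_all add: finite_factors_itinerary Disc_def)
  also have "\<dots> \<le> card (Disc c N)"
    by (rule card_mono) (auto simp: Disc_def)
  finally show ?thesis .
qed

lemma Delta_lr_subset_consecutive_right_extensions:
  "Delta_lr c N f n x \<subseteq>
     (\<Union>w\<in>factors \<theta> n. c ` {k \<in> right_extensions \<theta> w. Suc k \<in> right_extensions \<theta> w})"
proof
  fix z assume "z \<in> Delta_lr c N f n x"
  then obtain i A t t' where z: "z = c i" and A: "A \<in> atoms_x c N f n x"
    and t: "(f ^^ (t + n)) x \<in> A \<inter> Xpart c N i"
    and t': "(f ^^ (t' + n)) x \<in> A \<inter> Xpart c N (Suc i)"
    and i: "i \<in> {1..N - 1}"
    unfolding Delta_lr_def by blast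
  obtain u where u: "A = atom u" "length u = n" "set u \<subseteq> {1..N}"
    using A by (auto simp: atoms_x_def atoms_def)
  have ut: "map \<theta> [t..<t + n] = u" and ut': "map \<theta> [t'..<t' + n] = u"
    using orbit_in_atom_imp_factor u t t' by auto
  have "\<theta> (t + n) = i" "\<theta> (t' + n) = Suc i"
    using Xpart_disjoint[of "\<theta> (t + n)" i "(f ^^ (t + n)) x"]
      Xpart_disjoint[of "\<theta> (t' + n)" "Suc i" "(f ^^ (t' + n)) x"]
      itinerary_range orbit_in_Xpart t t' i by auto
  then have "i \<in> right_extensions \<theta> u" "Suc i \<in> right_extensions \<theta> u"
    using right_extensionsI[of \<theta> t u] right_extensionsI[of \<theta> t' u] ut ut' u(2) by simp_all
  moreover have "u \<in> factors \<theta> n"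
    using ut by (auto simp: factors_def)
  ultimately show "z \<in> (\<Union>w\<in>factors \<theta> n. c ` {k \<in> right_extensions \<theta> w. Suc k \<in> right_extensions \<theta> w})"
    using z by blast
qed

lemma card_Delta_lr_le_right_extensions_increment:
  "card (Delta_lr c N f n x) \<le> (\<Sum>w\<in>factors \<theta> n. card (right_extensions \<theta> w) - 1)"
proof -
  let ?P = "\<lambda>w. {k \<in> right_extensions \<theta> w. Suc k \<in> right_extensions \<theta> w}"
  have "card (Delta_lr c N f n x) \<le> card (\<Union>w\<in>factors \<theta> n. c ` ?P w)"
    by (rule card_mono[OF _ Delta_lr_subset_consecutive_right_extensions])
      (simp add: finite_factors_itinerary finite_right_extensions)
  also have "\<dots> \<le> (\<Sum>w\<in>factors \<theta> n. card (c ` ?P w))"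
    using finite_factors_itinerary by (rule card_UN_le)
  also have "\<dots> \<le> (\<Sum>w\<in>factors \<theta> n. card (right_extensions \<theta> w) - 1)"
  proof (rule sum_mono)
    fix w
    have "card (c ` ?P w) \<le> card (?P w)" by (rule card_image_le) (simp add: finite_right_extensions)
    also have "\<dots> \<le> card (right_extensions \<theta> w) - 1"
      by (rule card_with_successor_le[OF finite_right_extensions])
    finally show "card (c ` ?P w) \<le> card (right_extensions \<theta> w) - 1" .
  qed
  finally show ?thesis .
qed

lemma consecutive_right_extensions_in_Delta_lr:
  assumes w: "w \<in> factors \<theta> n" and i: "i \<in> right_extensions \<theta> w" "Suc i \<in> right_extensions \<theta> w"
  shows "c i \<in> Delta_lr c N f n x \<and> c i \<in> atom w"
proof -
  have n: "length w = n" using factors_letters[OF w] by simp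
  obtain t where t: "(f ^^ (t + n)) x \<in> atom w \<inter> Xpart c N i"
    using right_extension_orbit[OF i(1)] unfolding n by blast
  obtain t' where t': "(f ^^ (t' + n)) x \<in> atom w \<inter> Xpart c N (Suc i)"
    using right_extension_orbit[OF i(2)] unfolding n by blast
  have "i \<in> {1..N - 1}"
    using subsetD[OF right_extensions_letters i(1)] subsetD[OF right_extensions_letters i(2)] by simp
  moreover have "c i \<in> atom w"
    using discontinuities_between_right_extensions[OF i] by simp
  ultimately show ?thesis
    unfolding Delta_lr_def using atom_in_atoms_x[OF w] t t' by blast
qed

text \<open>A factor with two right extensions i < i + 1 is sent to c_i; this map is injective
  because the atoms of distinct factors are disjoint.\<close>

lemma right_extensions_increment_le_card_Delta_lr:
  assumes one: "\<forall>A \<in> atoms_x c N f n x. card (A \<inter> Disc c N) \<le> 1"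
  shows "(\<Sum>w\<in>factors \<theta> n. card (right_extensions \<theta> w) - 1) \<le> card (Delta_lr c N f n x)"
proof -
  let ?E = "right_extensions \<theta>"
  let ?W = "{w \<in> factors \<theta> n. card (?E w) = 2}"
  have one_w: "card (atom w \<inter> Disc c N) \<le> 1" if "w \<in> factors \<theta> n" for w
    using one atom_in_atoms_x[OF that] by blast
  have "(\<Sum>w\<in>factors \<theta> n. card (?E w) - 1) \<le> (\<Sum>w\<in>factors \<theta> n. if card (?E w) = 2 then 1 else 0)"
  proof (rule sum_mono)
    fix w assume "w \<in> factors \<theta> n"
    then have "card (?E w) \<le> 2" using card_right_extensions_le[of w] one_w[of w] by simp
    then show "card (?E w) - 1 \<le> (if card (?E w) = 2 then 1 else 0)" by simp
  qed
  also have "\<dots> = card ?W"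
    using sum.inter_filter[OF finite_factors_itinerary, where g = "\<lambda>_. 1::nat" and P = "\<lambda>w. card (?E w) = 2"]
    by simp
  also have "card ?W \<le> card (Delta_lr c N f n x)"
  proof (rule card_inj_on_le[of "\<lambda>w. c (Min (?E w))"])
    have visited: "c (Min (?E w)) \<in> Delta_lr c N f n x \<and> c (Min (?E w)) \<in> atom w"
      if w: "w \<in> ?W" for w
    proof -
      obtain a b where ab: "?E w = {a, b}" "a < b"
      proof -
        obtain a b where "?E w = {a, b}" "a \<noteq> b" using w by (auto simp: card_2_iff)
        then show thesis using that[of a b] that[of b a] by (cases "a < b") (auto simp: insert_commute)
      qed
      have "b - a = card (c ` {a..<b})"
        using subsetD[OF right_extensions_letters, of b w] ab by (simp add: card_c_image)
      also have "\<dots> \<le> card (atom w \<inter> Disc c N)"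
        using discontinuities_between_right_extensions[of a w b] ab
        by (intro card_mono) (simp_all add: Disc_def)
      also have "\<dots> \<le> 1" using one_w w by simp
      finally have "b = Suc a" using ab(2) by simp
      then show ?thesis
        using consecutive_right_extensions_in_Delta_lr[of w n a] w ab by simp
    qed
    then show "(\<lambda>w. c (Min (?E w))) ` ?W \<subseteq> Delta_lr c N f n x" by blast
    show "inj_on (\<lambda>w. c (Min (?E w))) ?W"
    proof (rule inj_onI)
      fix w w' assume w: "w \<in> ?W" and w': "w' \<in> ?W"
        and eq: "c (Min (?E w)) = c (Min (?E w'))"
      then have "atom w \<inter> atom w' \<noteq> {}" using visited[OF w] visited[OF w'] by auto
      then show "w = w'" using atoms_of_factors_disjoint w w' by blast
    qed
    show "finite (Delta_lr c N f n x)"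
      using Delta_lr_subset_Disc by (rule finite_subset) (simp add: Disc_def)
  qed
  finally show ?thesis .
qed

end

theorem lemma5:
  fixes c :: "nat \<Rightarrow> real" and N :: nat and lam :: real and f :: "real \<Rightarrow> real"
    and x :: real and \<theta> :: "nat \<Rightarrow> nat"
  assumes "pc_map c N lam f"
    and "separation c N f"
    and "x \<in> Xtilde c N f"
    and "is_itinerary c N f x \<theta>"
  shows "(\<forall>n \<ge> 1. pcompl \<theta> n + card (Delta_lr c N f n x) \<le> pcompl \<theta> (n + 1) \<and>
                   pcompl \<theta> (n + 1) \<le> pcompl \<theta> n + card (Disc c N))
    \<and> (\<forall>n0 \<ge> 1.
         (\<forall>n \<ge> n0. \<forall>A \<in> atoms_x c N f n x. card (A \<inter> Disc c N) \<le> 1) \<and>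
         (\<forall>m \<ge> 1. (\<forall>n \<ge> m. \<forall>A \<in> atoms_x c N f n x. card (A \<inter> Disc c N) \<le> 1) \<longrightarrow> n0 \<le> m)
         \<longrightarrow> (\<forall>n \<ge> n0. pcompl \<theta> (n + 1) = pcompl \<theta> n + card (Delta_lr c N f n x)))"
proof -
  interpret pc_itinerary c N lam f x \<theta>
    using assms by (simp add: pc_itinerary_def pc_itinerary_axioms_def pc_interval_map_def)
  have increment: "pcompl \<theta> (n + 1) =
      pcompl \<theta> n + (\<Sum>w\<in>factors \<theta> n. card (right_extensions \<theta> w) - 1)" for n
    using pcompl_Suc_eq_sum_right_extensions[OF finite_range_itinerary] by simp
  show ?thesis
    unfolding increment
    using card_Delta_lr_le_right_extensions_increment right_extensions_increment_le_card_Disc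
      right_extensions_increment_le_card_Delta_lr
    by (auto intro: antisym)
qed

end
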